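(* Let $\Lambda$ be a finite $k$-graph without sources, $F$ a well chosen sequence, $C$ an $F$-harmonic component, and $x_F^C$ the unique vector in $[0,\infty)^{\Lambda^0}$ of unit $1$-norm with $A_Fx_F^C=\rho(A_F^C)x_F^C$ and $(x_F^C)_v=0$ for $v\notin\overline C$. Then $A_ix_F^C=\rho(A_i^C)\,x_F^C$ for every $i=1,\dots,k$.
   Context: A $k$-graph $(\Lambda,d)$ is a countable small category with functor $d:\Lambda\to\mathbb N^k$ having the unique factorisation property (for $d(\lambda)=m+n$ there are unique $\mu,\nu$ with $d(\mu)=m,d(\nu)=n,\lambda=\mu\nu$). $\Lambda^0=d^{-1}(0)$ are the vertices, $\Lambda^n=d^{-1}(n)$, $r,s$ range and source, $v\Lambda^nw=\{\lambda\in\Lambda^n:r(\lambda)=v,s(\lambda)=w\}$, $v\Lambda w=\bigcup_n v\Lambda^n w$, and for $V,W\subseteq\Lambda^0$, $V\Lambda W=\bigcup_{v\in V,w\in W}v\Lambda w$. Finite: each $\Lambda^n$ finite; without sources: $v\Lambda^n\neq\emptyset$ for all $v,n$. Vertex matrices $A_i(v,w)=|v\Lambda^{e_i}w|$, $A^n=\prod_iA_i^{n_i}$. Define $v\le w$ iff $v\Lambda w\ne\emptyset$ and $v\sim w$ iff $v\le w$ and $w\le v$; the equivalence classes are components. A component $C$ is trivial if $C\Lambda C=\{v\}$ for a single vertex $v$, non-trivial otherwise. The closure of $V\subseteq\Lambda^0$ is $\overline V=\{w\in\Lambda^0:w\Lambda V\ne\emptyset\}$. For a $\Lambda^0\times\Lambda^0$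 matrix $B$ and $R,S\subseteq\Lambda^0$, $B^{R,S}$ is the submatrix with rows $R$ and columns $S$, $B^S=B^{S,S}$, and $\rho$ denotes spectral radius. For a finite sequence $F=(a_1,\dots,a_m)$ in $\mathbb N^k\setminus\{0\}$ (repetitions allowed), $A_F=\sum_{j=1}^mA^{a_j}$, and $A_F^{R,S}$ means $(A_F)^{R,S}$; $F$ is well chosen if for all $v,w$: $A_F(v,w)>0$ iff $v\Lambda^lw\neq\emptyset$ for some $l\in\mathbb N^k\setminus\{0\}$. A non-trivial component $C$ is $F$-harmonic if either $\overline C\setminus C=\emptyset$ or $\rho(A_F^C)>\rho(A_F^{\overline C\setminus C})$. *)

theory Defs
  imports "HOL-Analysis.Analysis"
begin

text \<open>A k-graph is given by a set of morphisms Lam (elements of type 'a), a degree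
  functor d with values in N^k (encoded as functions nat => nat supported in {..<k}),
  range and source maps r, s and a (partial) composition cmp, defined on composable
  pairs (s mu = r nu).  Objects are identified with their identity morphisms, which are
  exactly the morphisms of degree 0 (the set of vertices Lambda^0).\<close>

definition in_Nk :: "nat \<Rightarrow> (nat \<Rightarrow> nat) \<Rightarrow> bool" where
  "in_Nk k n \<longleftrightarrow> (\<forall>i\<ge>k. n i = 0)"

definition unitvec :: "nat \<Rightarrow> nat \<Rightarrow> nat" where
  "unitvec i = (\<lambda>j. if j = i then 1 else 0)"

definition verts :: "'a set \<Rightarrow> ('a \<Rightarrow> nat \<Rightarrow> nat) \<Rightarrow> 'a set" where
  "verts Lam d = {l \<in> Lam. d l = (\<lambda>_. 0)}"

definition is_kgraph ::
  "nat \<Rightarrow> 'a set \<Rightarrow> ('a \<Rightarrow> nat \<Rightarrow> nat) \<Rightarrow> ('a \<Rightarrow> 'a) \<Rightarrow> ('a \<Rightarrow> 'a) \<Rightarrow> ('a \<Rightarrow> 'a \<Rightarrow> 'a) \<Rightarrow> bool"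
where
  "is_kgraph k Lam d r s cmp \<longleftrightarrow>
     countable Lam \<and>
     (\<forall>l\<in>Lam. in_Nk k (d l)) \<and>
     (\<forall>l\<in>Lam. r l \<in> verts Lam d \<and> s l \<in> verts Lam d) \<and>
     (\<forall>v\<in>verts Lam d. r v = v \<and> s v = v) \<and>
     (\<forall>mu\<in>Lam. \<forall>nu\<in>Lam. s mu = r nu \<longrightarrow>
        cmp mu nu \<in> Lam \<and> r (cmp mu nu) = r mu \<and> s (cmp mu nu) = s nu \<and>
        d (cmp mu nu) = (\<lambda>i. d mu i + d nu i)) \<and>
     (\<forall>l\<in>Lam. cmp (r l) l = l \<and> cmp l (s l) = l) \<and>
     (\<forall>la\<in>Lam. \<forall>mu\<in>Lam. \<forall>nu\<in>Lam. s la = r mu \<longrightarrow> s mu = r nu \<longrightarrow>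
        cmp (cmp la mu) nu = cmp la (cmp mu nu)) \<and>
     (\<forall>l\<in>Lam. \<forall>m n. in_Nk k m \<longrightarrow> in_Nk k n \<longrightarrow> d l = (\<lambda>i. m i + n i) \<longrightarrow>
        (\<exists>!p. fst p \<in> Lam \<and> snd p \<in> Lam \<and> s (fst p) = r (snd p) \<and>
              d (fst p) = m \<and> d (snd p) = n \<and> l = cmp (fst p) (snd p)))"

definition finite_kgraph :: "nat \<Rightarrow> 'a set \<Rightarrow> ('a \<Rightarrow> nat \<Rightarrow> nat) \<Rightarrow> bool" where
  "finite_kgraph k Lam d \<longleftrightarrow> (\<forall>n. in_Nk k n \<longrightarrow> finite {l \<in> Lam. d l = n})"

definition no_sources ::
  "nat \<Rightarrow> 'a set \<Rightarrow> ('a \<Rightarrow> nat \<Rightarrow> nat) \<Rightarrow> ('a \<Rightarrow> 'a) \<Rightarrow> bool" where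
  "no_sources k Lam d r \<longleftrightarrow>
     (\<forall>v\<in>verts Lam d. \<forall>n. in_Nk k n \<longrightarrow> (\<exists>l\<in>Lam. d l = n \<and> r l = v))"

definition paths ::
  "'a set \<Rightarrow> ('a \<Rightarrow> 'a) \<Rightarrow> ('a \<Rightarrow> 'a) \<Rightarrow> 'a set \<Rightarrow> 'a set \<Rightarrow> 'a set" where
  "paths Lam r s V W = {l \<in> Lam. r l \<in> V \<and> s l \<in> W}"

definition mmul :: "'a set \<Rightarrow> ('a \<Rightarrow> 'a \<Rightarrow> real) \<Rightarrow> ('a \<Rightarrow> 'a \<Rightarrow> real) \<Rightarrow> ('a \<Rightarrow> 'a \<Rightarrow> real)" where
  "mmul V B C = (\<lambda>v w. \<Sum>u\<in>V. B v u * C u w)"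

definition mid :: "'a \<Rightarrow> 'a \<Rightarrow> real" where
  "mid = (\<lambda>v w. if v = w then 1 else 0)"

fun mpow :: "'a set \<Rightarrow> ('a \<Rightarrow> 'a \<Rightarrow> real) \<Rightarrow> nat \<Rightarrow> ('a \<Rightarrow> 'a \<Rightarrow> real)" where
  "mpow V B 0 = mid"
| "mpow V B (Suc n) = mmul V B (mpow V B n)"

text \<open>degpow V A j n = A_0^(n 0) * ... * A_(j-1)^(n (j-1)); with j = k this is A^n.\<close>

fun degpow :: "'a set \<Rightarrow> (nat \<Rightarrow> 'a \<Rightarrow> 'a \<Rightarrow> real) \<Rightarrow> nat \<Rightarrow> (nat \<Rightarrow> nat) \<Rightarrow> ('a \<Rightarrow> 'a \<Rightarrow> real)" where
  "degpow V A 0 n = mid"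
| "degpow V A (Suc j) n = mmul V (degpow V A j n) (mpow V (A j) (n j))"

text \<open>Vertex matrices A_i (index i = 0..k-1 stands for the paper's 1..k).\<close>

definition vertex_matrix ::
  "'a set \<Rightarrow> ('a \<Rightarrow> nat \<Rightarrow> nat) \<Rightarrow> ('a \<Rightarrow> 'a) \<Rightarrow> ('a \<Rightarrow> 'a) \<Rightarrow> nat \<Rightarrow> 'a \<Rightarrow> 'a \<Rightarrow> real" where
  "vertex_matrix Lam d r s i = (\<lambda>v w. real (card {l \<in> Lam. d l = unitvec i \<and> r l = v \<and> s l = w}))"

definition AF :: "'a set \<Rightarrow> (nat \<Rightarrow> 'a \<Rightarrow> 'a \<Rightarrow> real) \<Rightarrow> nat \<Rightarrow> (nat \<Rightarrow> nat) list \<Rightarrow> 'a \<Rightarrow> 'a \<Rightarrow> real" where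
  "AF V A k F = (\<lambda>v w. \<Sum>j<length F. degpow V A k (F ! j) v w)"

definition sub_eigenvalue :: "'a set \<Rightarrow> ('a \<Rightarrow> 'a \<Rightarrow> real) \<Rightarrow> complex \<Rightarrow> bool" where
  "sub_eigenvalue S B c \<longleftrightarrow>
     (\<exists>x :: 'a \<Rightarrow> complex. (\<exists>v\<in>S. x v \<noteq> 0) \<and>
        (\<forall>v\<in>S. (\<Sum>w\<in>S. complex_of_real (B v w) * x w) = c * x v))"

definition spec_rad :: "'a set \<Rightarrow> ('a \<Rightarrow> 'a \<Rightarrow> real) \<Rightarrow> real" where
  "spec_rad S B = Sup (cmod ` {c. sub_eigenvalue S B c})"

definition vle :: "'a set \<Rightarrow> ('a \<Rightarrow> 'a) \<Rightarrow> ('a \<Rightarrow> 'a) \<Rightarrow> 'a \<Rightarrow> 'a \<Rightarrow> bool" where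
  "vle Lam r s v w \<longleftrightarrow> paths Lam r s {v} {w} \<noteq> {}"

definition is_component ::
  "'a set \<Rightarrow> ('a \<Rightarrow> nat \<Rightarrow> nat) \<Rightarrow> ('a \<Rightarrow> 'a) \<Rightarrow> ('a \<Rightarrow> 'a) \<Rightarrow> 'a set \<Rightarrow> bool" where
  "is_component Lam d r s C \<longleftrightarrow>
     (\<exists>v\<in>verts Lam d. C = {w \<in> verts Lam d. vle Lam r s v w \<and> vle Lam r s w v})"

definition nontrivial_component ::
  "'a set \<Rightarrow> ('a \<Rightarrow> nat \<Rightarrow> nat) \<Rightarrow> ('a \<Rightarrow> 'a) \<Rightarrow> ('a \<Rightarrow> 'a) \<Rightarrow> 'a set \<Rightarrow> bool" where
  "nontrivial_component Lam d r s C \<longleftrightarrow>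
     is_component Lam d r s C \<and> \<not> (\<exists>v. paths Lam r s C C = {v})"

definition vclosure ::
  "'a set \<Rightarrow> ('a \<Rightarrow> nat \<Rightarrow> nat) \<Rightarrow> ('a \<Rightarrow> 'a) \<Rightarrow> ('a \<Rightarrow> 'a) \<Rightarrow> 'a set \<Rightarrow> 'a set" where
  "vclosure Lam d r s V = {w \<in> verts Lam d. \<exists>v\<in>V. paths Lam r s {w} {v} \<noteq> {}}"

definition well_chosen ::
  "nat \<Rightarrow> 'a set \<Rightarrow> ('a \<Rightarrow> nat \<Rightarrow> nat) \<Rightarrow> ('a \<Rightarrow> 'a) \<Rightarrow> ('a \<Rightarrow> 'a) \<Rightarrow> (nat \<Rightarrow> nat) list \<Rightarrow> bool" where
  "well_chosen k Lam d r s F \<longleftrightarrow>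
     (\<forall>a\<in>set F. in_Nk k a \<and> a \<noteq> (\<lambda>_. 0)) \<and>
     (\<forall>v\<in>verts Lam d. \<forall>w\<in>verts Lam d.
        AF (verts Lam d) (vertex_matrix Lam d r s) k F v w > 0 \<longleftrightarrow>
        (\<exists>l\<in>Lam. d l \<noteq> (\<lambda>_. 0) \<and> r l = v \<and> s l = w))"

definition F_harmonic ::
  "nat \<Rightarrow> 'a set \<Rightarrow> ('a \<Rightarrow> nat \<Rightarrow> nat) \<Rightarrow> ('a \<Rightarrow> 'a) \<Rightarrow> ('a \<Rightarrow> 'a) \<Rightarrow> (nat \<Rightarrow> nat) list \<Rightarrow> 'a set \<Rightarrow> bool" where
  "F_harmonic k Lam d r s F C \<longleftrightarrow>
     nontrivial_component Lam d r s C \<and>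
     (let AFm = AF (verts Lam d) (vertex_matrix Lam d r s) k F;
          D = vclosure Lam d r s C - C
      in D = {} \<or> spec_rad C AFm > spec_rad D AFm)"

end

theory Submission
  imports Defs
begin

text \<open>The factorisation property makes A_i A_j count the paths of degree e_i + e_j, so the
  vertex matrices commute, and hence each A_i commutes with A_F.  Therefore A_i x is again an
  eigenvector of A_F for \<rho>(A_F^C) supported on the closure of C.  Such eigenvectors are unique
  up to scaling: one supported on the closure minus C vanishes because C is F-harmonic, and
  irreducibility of A_F on C lets one subtract a multiple of x (which is positive on C) to reach
  that case.  So A_i x = t x, and since x is positive on C, t is the spectral radius of A_i^C.\<close>

section \<open>Matrices acting on vectors\<close>

definition mat_vec :: "'a set \<Rightarrow> ('a \<Rightarrow> 'a \<Rightarrow> real) \<Rightarrow> ('a \<Rightarrow> real) \<Rightarrow> 'a \<Rightarrow> real" where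
  "mat_vec V B f = (\<lambda>v. \<Sum>w\<in>V. B v w * f w)"

lemma mat_vec_cong: "\<forall>w\<in>V. f w = g w \<Longrightarrow> mat_vec V B f v = mat_vec V B g v"
  unfolding mat_vec_def by (auto intro: sum.cong)

lemma mat_vec_mmul: "mat_vec V (mmul V B C) f v = mat_vec V B (mat_vec V C f) v"
proof -
  have "mat_vec V (mmul V B C) f v = (\<Sum>w\<in>V. \<Sum>u\<in>V. B v u * C u w * f w)"
    unfolding mat_vec_def mmul_def by (simp add: sum_distrib_right)
  also have "\<dots> = (\<Sum>u\<in>V. \<Sum>w\<in>V. B v u * C u w * f w)" by (rule sum.swap)
  also have "\<dots> = mat_vec V B (mat_vec V C f) v"
    unfolding mat_vec_def by (simp add: sum_distrib_left mult.assoc)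
  finally show ?thesis .
qed

lemma mat_vec_mid: "mat_vec V mid f v = f v" if "finite V" "v \<in> V"
proof -
  have "mat_vec V mid f v = (\<Sum>w\<in>V. if v = w then f w else 0)"
    unfolding mat_vec_def mid_def by (rule sum.cong) auto
  then show ?thesis using that by simp
qed

lemma mat_vec_sum_matrix: "mat_vec V (\<lambda>v w. \<Sum>j\<in>J. M j v w) f v = (\<Sum>j\<in>J. mat_vec V (M j) f v)"
  unfolding mat_vec_def by (simp add: sum_distrib_right sum.swap[of _ J])

lemma mat_vec_sum_vector: "mat_vec V B (\<lambda>u. \<Sum>j\<in>J. g j u) v = (\<Sum>j\<in>J. mat_vec V B (g j) v)"
  unfolding mat_vec_def by (simp add: sum_distrib_left sum.swap[of _ J])

lemma mat_vec_eigen_combination: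
  assumes "\<forall>v\<in>V. mat_vec V B f v = t * f v" "\<forall>v\<in>V. mat_vec V B g v = t * g v"
  shows "\<forall>v\<in>V. mat_vec V B (\<lambda>w. f w - c * g w) v = t * (f v - c * g v)"
proof
  fix v assume "v \<in> V"
  have "mat_vec V B (\<lambda>w. f w - c * g w) v = mat_vec V B f v - c * mat_vec V B g v"
    unfolding mat_vec_def by (simp add: algebra_simps sum_subtractf sum_distrib_left)
  then show "mat_vec V B (\<lambda>w. f w - c * g w) v = t * (f v - c * g v)"
    using assms \<open>v \<in> V\<close> by (simp add: algebra_simps)
qed

definition commute_on :: "'a set \<Rightarrow> ('a \<Rightarrow> 'a \<Rightarrow> real) \<Rightarrow> ('a \<Rightarrow> 'a \<Rightarrow> real) \<Rightarrow> bool" where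
  "commute_on V X Y \<longleftrightarrow>
     (\<forall>f. \<forall>v\<in>V. mat_vec V X (mat_vec V Y f) v = mat_vec V Y (mat_vec V X f) v)"

lemma commute_onI_mmul:
  assumes "\<forall>v\<in>V. \<forall>w\<in>V. mmul V X Y v w = mmul V Y X v w"
  shows "commute_on V X Y"
  unfolding commute_on_def
proof (intro allI ballI)
  fix f v assume "v \<in> V"
  have "mat_vec V X (mat_vec V Y f) v = mat_vec V (mmul V X Y) f v" by (simp add: mat_vec_mmul)
  also have "\<dots> = mat_vec V (mmul V Y X) f v"
    unfolding mat_vec_def using assms \<open>v \<in> V\<close> by (auto intro: sum.cong)
  also have "\<dots> = mat_vec V Y (mat_vec V X f) v" by (simp add: mat_vec_mmul)
  finally show "mat_vec V X (mat_vec V Y f) v = mat_vec V Y (mat_vec V X f) v" .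
qed

lemma commute_on_mid: "finite V \<Longrightarrow> commute_on V X mid"
  unfolding commute_on_def by (auto simp: mat_vec_mid intro: trans[OF mat_vec_cong])

lemma commute_on_mmul:
  assumes XY: "commute_on V X Y" and XZ: "commute_on V X Z"
  shows "commute_on V X (mmul V Y Z)"
  unfolding commute_on_def
proof (intro allI ballI)
  fix f v assume v: "v \<in> V"
  have "mat_vec V X (mat_vec V (mmul V Y Z) f) v = mat_vec V X (mat_vec V Y (mat_vec V Z f)) v"
    by (rule mat_vec_cong) (simp add: mat_vec_mmul)
  also have "\<dots> = mat_vec V Y (mat_vec V X (mat_vec V Z f)) v"
    using XY v unfolding commute_on_def by blast
  also have "\<dots> = mat_vec V Y (mat_vec V Z (mat_vec V X f)) v"
    using XZ unfolding commute_on_def by (intro mat_vec_cong) blast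
  also have "\<dots> = mat_vec V (mmul V Y Z) (mat_vec V X f) v" by (simp add: mat_vec_mmul)
  finally show "mat_vec V X (mat_vec V (mmul V Y Z) f) v = mat_vec V (mmul V Y Z) (mat_vec V X f) v" .
qed

lemma commute_on_mpow: "finite V \<Longrightarrow> commute_on V X Y \<Longrightarrow> commute_on V X (mpow V Y n)"
  by (induction n) (auto simp: commute_on_mid commute_on_mmul)

lemma commute_on_degpow:
  "finite V \<Longrightarrow> \<forall>i<j. commute_on V X (A i) \<Longrightarrow> commute_on V X (degpow V A j n)"
  by (induction j) (auto simp: commute_on_mid commute_on_mmul commute_on_mpow)

lemma commute_on_sum:
  assumes "\<forall>j\<in>J. commute_on V X (M j)"
  shows "commute_on V X (\<lambda>v w. \<Sum>j\<in>J. M j v w)"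
  unfolding commute_on_def
proof (intro allI ballI)
  fix f v assume "v \<in> V"
  have "mat_vec V X (mat_vec V (\<lambda>v w. \<Sum>j\<in>J. M j v w) f) v
      = (\<Sum>j\<in>J. mat_vec V X (mat_vec V (M j) f) v)"
    by (simp add: mat_vec_sum_matrix[abs_def] mat_vec_sum_vector)
  also have "\<dots> = (\<Sum>j\<in>J. mat_vec V (M j) (mat_vec V X f) v)"
    using assms \<open>v \<in> V\<close> unfolding commute_on_def by (auto intro: sum.cong)
  also have "\<dots> = mat_vec V (\<lambda>v w. \<Sum>j\<in>J. M j v w) (mat_vec V X f) v"
    by (simp add: mat_vec_sum_matrix)
  finally show "mat_vec V X (mat_vec V (\<lambda>v w. \<Sum>j\<in>J. M j v w) f) v
      = mat_vec V (\<lambda>v w. \<Sum>j\<in>J. M j v w) (mat_vec V X f) v" .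
qed

lemma commute_on_AF: "finite V \<Longrightarrow> \<forall>i<k. commute_on V X (A i) \<Longrightarrow> commute_on V X (AF V A k F)"
  unfolding AF_def by (rule commute_on_sum) (auto intro: commute_on_degpow)

lemma mpow_nonneg: "\<forall>a b. B a b \<ge> 0 \<Longrightarrow> mpow V B n v w \<ge> 0"
  by (induction n arbitrary: v w) (auto simp: mid_def mmul_def intro!: sum_nonneg)

lemma degpow_nonneg: "\<forall>i a b. A i a b \<ge> 0 \<Longrightarrow> degpow V A j n v w \<ge> 0"
  by (induction j arbitrary: v w) (auto simp: mid_def mmul_def mpow_nonneg intro!: sum_nonneg)

lemma AF_nonneg: "\<forall>i a b. A i a b \<ge> 0 \<Longrightarrow> AF V A k F v w \<ge> 0"
  unfolding AF_def by (auto intro!: sum_nonneg degpow_nonneg)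

section \<open>Spectral radius and positive eigenvectors\<close>

lemma sub_eigenvalue_of_real:
  assumes "\<exists>v\<in>S. f v \<noteq> 0" and "\<forall>v\<in>S. (\<Sum>w\<in>S. B v w * f w) = t * f v"
  shows "sub_eigenvalue S B (complex_of_real t)"
  unfolding sub_eigenvalue_def
proof (intro exI conjI)
  show "\<exists>v\<in>S. complex_of_real (f v) \<noteq> 0" using assms(1) by simp
  show "\<forall>v\<in>S. (\<Sum>w\<in>S. complex_of_real (B v w) * complex_of_real (f w))
      = complex_of_real t * complex_of_real (f v)"
    using assms(2) by (metis (no_types, lifting) of_real_mult of_real_sum sum.cong)
qed

lemma norm_sub_eigenvalue_le_abs_sum:
  assumes "finite S" and "sub_eigenvalue S B c"
  shows "cmod c \<le> (\<Sum>v\<in>S. \<Sum>w\<in>S. \<bar>B v w\<bar>)"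
proof -
  obtain z where nz: "\<exists>v\<in>S. z v \<noteq> 0"
    and eq: "\<forall>v\<in>S. (\<Sum>w\<in>S. complex_of_real (B v w) * z w) = c * z v"
    using assms(2) unfolding sub_eigenvalue_def by blast
  define m where "m = Max ((\<lambda>v. cmod (z v)) ` S)"
  have le: "\<forall>w\<in>S. cmod (z w) \<le> m" unfolding m_def using assms(1) by simp
  obtain v1 where v1: "v1 \<in> S" "cmod (z v1) = m"
    using Max_in[of "(\<lambda>v. cmod (z v)) ` S"] assms(1) nz unfolding m_def by fastforce
  have "m > 0" using nz le by (metis zero_less_norm_iff order.strict_trans2)
  have "cmod c * m = cmod (\<Sum>w\<in>S. complex_of_real (B v1 w) * z w)"
    using eq v1 by (simp add: norm_mult)
  also have "\<dots> \<le> (\<Sum>w\<in>S. \<bar>B v1 w\<bar> * cmod (z w))"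
    by (rule order.trans[OF norm_sum]) (simp add: norm_mult)
  also have "\<dots> \<le> (\<Sum>w\<in>S. \<bar>B v1 w\<bar>) * m"
    using le by (auto simp: sum_distrib_right intro!: sum_mono mult_left_mono)
  finally have "cmod c \<le> (\<Sum>w\<in>S. \<bar>B v1 w\<bar>)" using \<open>m > 0\<close> by simp
  also have "\<dots> \<le> (\<Sum>v\<in>S. \<Sum>w\<in>S. \<bar>B v w\<bar>)"
    by (rule member_le_sum[OF v1(1)]) (auto intro: sum_nonneg assms(1))
  finally show ?thesis .
qed

lemma norm_le_spec_rad: "finite S \<Longrightarrow> sub_eigenvalue S B c \<Longrightarrow> cmod c \<le> spec_rad S B"
  unfolding spec_rad_def
  by (rule cSup_upper) (auto simp: bdd_above_def intro: norm_sub_eigenvalue_le_abs_sum)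

lemma norm_sub_eigenvalue_le_pos_eigenvalue:
  assumes S: "finite S" and x_pos: "\<forall>v\<in>S. x v > 0" and B_nonneg: "\<forall>v\<in>S. \<forall>w\<in>S. B v w \<ge> 0"
    and x_eig: "\<forall>v\<in>S. (\<Sum>w\<in>S. B v w * x w) = t * x v"
    and c: "sub_eigenvalue S B c"
  shows "cmod c \<le> t"
proof -
  obtain z where nz: "\<exists>v\<in>S. z v \<noteq> 0"
    and eq: "\<forall>v\<in>S. (\<Sum>w\<in>S. complex_of_real (B v w) * z w) = c * z v"
    using c unfolding sub_eigenvalue_def by blast
  define m where "m = Max ((\<lambda>v. cmod (z v) / x v) ` S)"
  have "\<forall>w\<in>S. cmod (z w) / x w \<le> m" unfolding m_def using S by simp
  then have le: "\<forall>w\<in>S. cmod (z w) \<le> m * x w" using x_pos by (simp add: divide_le_eq)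
  obtain v1 where v1: "v1 \<in> S" "cmod (z v1) / x v1 = m"
    using Max_in[of "(\<lambda>v. cmod (z v) / x v) ` S"] S nz unfolding m_def by fastforce
  then have zv1: "cmod (z v1) = m * x v1" using x_pos[rule_format, OF v1(1)] by (simp add: field_simps)
  have "cmod (z v1) > 0"
    using nz le zv1 x_pos v1(1) by (metis mult_pos_pos zero_less_norm_iff order.strict_trans2 zero_less_mult_pos2)
  have "cmod c * cmod (z v1) = cmod (\<Sum>w\<in>S. complex_of_real (B v1 w) * z w)"
    using eq v1 by (simp add: norm_mult)
  also have "\<dots> \<le> (\<Sum>w\<in>S. B v1 w * cmod (z w))"
    by (rule order.trans[OF norm_sum]) (use B_nonneg v1 in \<open>simp add: norm_mult\<close>)
  also have "\<dots> \<le> (\<Sum>w\<in>S. B v1 w * (m * x w))"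
    using le B_nonneg v1(1) by (intro sum_mono mult_left_mono) auto
  also have "\<dots> = m * (\<Sum>w\<in>S. B v1 w * x w)"
    by (simp add: sum_distrib_left mult.left_commute)
  also have "\<dots> = t * cmod (z v1)" using x_eig v1 zv1 by simp
  finally show ?thesis using \<open>cmod (z v1) > 0\<close> by simp
qed

lemma spec_rad_eq_pos_eigenvalue:
  assumes S: "finite S" "S \<noteq> {}" and x_pos: "\<forall>v\<in>S. x v > 0"
    and B_nonneg: "\<forall>v\<in>S. \<forall>w\<in>S. B v w \<ge> 0"
    and x_eig: "\<forall>v\<in>S. (\<Sum>w\<in>S. B v w * x w) = t * x v"
  shows "spec_rad S B = t"
proof -
  have bound: "cmod c \<le> t" if "sub_eigenvalue S B c" for c
    using norm_sub_eigenvalue_le_pos_eigenvalue[OF S(1) x_pos B_nonneg x_eig that] .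
  have t: "sub_eigenvalue S B (complex_of_real t)"
    using sub_eigenvalue_of_real[OF _ x_eig] S(2) x_pos by force
  show ?thesis
    unfolding spec_rad_def
  proof (rule cSup_eq_maximum)
    show "t \<in> cmod ` {c. sub_eigenvalue S B c}"
      using t bound[OF t] by (auto intro!: image_eqI[of _ _ "complex_of_real t"])
  qed (use bound in blast)
qed

lemma eigenvector_zero_if_spec_rad_less:
  assumes V: "finite V" "D \<subseteq> V" and supp: "\<forall>v\<in>V - D. f v = 0"
    and eig: "\<forall>v\<in>D. mat_vec V B f v = t * f v" and less: "spec_rad D B < t"
  shows "\<forall>v\<in>V. f v = 0"
proof (rule ccontr)
  assume "\<not> (\<forall>v\<in>V. f v = 0)"
  then have "\<exists>v\<in>D. f v \<noteq> 0" using supp by blast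
  moreover have "\<forall>v\<in>D. (\<Sum>w\<in>D. B v w * f w) = t * f v"
  proof
    fix v assume "v \<in> D"
    have "(\<Sum>w\<in>D. B v w * f w) = mat_vec V B f v"
      unfolding mat_vec_def by (rule sum.mono_neutral_left[OF V]) (use supp in auto)
    then show "(\<Sum>w\<in>D. B v w * f w) = t * f v" using eig \<open>v \<in> D\<close> by simp
  qed
  ultimately have "sub_eigenvalue D B (complex_of_real t)" by (rule sub_eigenvalue_of_real)
  then have "cmod (complex_of_real t) \<le> spec_rad D B"
    using V finite_subset norm_le_spec_rad by blast
  then show False using less by simp
qed

section \<open>Commuting vertex matrices\<close>

locale finite_k_graph =
  fixes k :: nat and Lam :: "'a set" and d :: "'a \<Rightarrow> nat \<Rightarrow> nat"
    and r s :: "'a \<Rightarrow> 'a" and cmp :: "'a \<Rightarrow> 'a \<Rightarrow> 'a"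
  assumes kg: "is_kgraph k Lam d r s cmp"
    and fin: "finite_kgraph k Lam d"
begin

abbreviation "V \<equiv> verts Lam d"
abbreviation "A \<equiv> vertex_matrix Lam d r s"
abbreviation "le \<equiv> vle Lam r s"

lemma finite_V: "finite V"
  using fin unfolding finite_kgraph_def verts_def in_Nk_def by auto

lemma range_source_in_V: "l \<in> Lam \<Longrightarrow> r l \<in> V \<and> s l \<in> V"
  using kg unfolding is_kgraph_def by blast

lemma compose:
  "mu \<in> Lam \<Longrightarrow> nu \<in> Lam \<Longrightarrow> s mu = r nu \<Longrightarrow> cmp mu nu \<in> Lam \<and> r (cmp mu nu) = r mu
     \<and> s (cmp mu nu) = s nu \<and> d (cmp mu nu) = (\<lambda>i. d mu i + d nu i)"
  using kg unfolding is_kgraph_def by blast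

lemma factorisation:
  "l \<in> Lam \<Longrightarrow> in_Nk k m \<Longrightarrow> in_Nk k n \<Longrightarrow> d l = (\<lambda>i. m i + n i) \<Longrightarrow>
   \<exists>!p. fst p \<in> Lam \<and> snd p \<in> Lam \<and> s (fst p) = r (snd p) \<and>
        d (fst p) = m \<and> d (snd p) = n \<and> l = cmp (fst p) (snd p)"
  using kg unfolding is_kgraph_def by blast

lemma vertex_range_source: "v \<in> V \<Longrightarrow> r v = v \<and> s v = v"
  using kg unfolding is_kgraph_def by blast

lemma vle_refl: "v \<in> V \<Longrightarrow> le v v"
  using vertex_range_source unfolding vle_def paths_def verts_def by blast

lemma vle_trans: "le u v \<Longrightarrow> le v w \<Longrightarrow> le u w"
proof -
  assume "le u v" "le v w"
  then obtain l1 l2 where "l1 \<in> Lam" "r l1 = u" "s l1 = v" "l2 \<in> Lam" "r l2 = v" "s l2 = w"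
    unfolding vle_def paths_def by blast
  then show ?thesis using compose[of l1 l2] unfolding vle_def paths_def by auto
qed

lemma vertex_matrix_nonneg: "A i v w \<ge> 0"
  unfolding vertex_matrix_def by simp

lemma vertex_matrix_pos_imp_vle: "A i v w > 0 \<Longrightarrow> le v w"
proof -
  assume "A i v w > 0"
  then have "{l \<in> Lam. d l = unitvec i \<and> r l = v \<and> s l = w} \<noteq> {}"
    unfolding vertex_matrix_def by (metis card.empty of_nat_0 less_irrefl)
  then show ?thesis unfolding vle_def paths_def by blast
qed

lemma bij_betw_composable_pairs:
  assumes m: "in_Nk k m" and n: "in_Nk k n"
  shows "bij_betw (case_prod cmp)
    {(mu, nu). mu \<in> Lam \<and> nu \<in> Lam \<and> s mu = r nu \<and> d mu = m \<and> d nu = n \<and> r mu = v \<and> s nu = w}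
    {l \<in> Lam. d l = (\<lambda>i. m i + n i) \<and> r l = v \<and> s l = w}"
    (is "bij_betw _ ?P ?T")
proof (rule bij_betw_imageI)
  show "inj_on (case_prod cmp) ?P"
  proof (rule inj_onI)
    fix p q assume "p \<in> ?P" "q \<in> ?P" and eq: "case_prod cmp p = case_prod cmp q"
    then have "fst p \<in> Lam \<and> snd p \<in> Lam \<and> s (fst p) = r (snd p) \<and> d (fst p) = m \<and> d (snd p) = n"
      and "fst q \<in> Lam \<and> snd q \<in> Lam \<and> s (fst q) = r (snd q) \<and> d (fst q) = m \<and> d (snd q) = n"
      by auto
    moreover have "cmp (fst p) (snd p) = cmp (fst q) (snd q)" using eq by (simp add: case_prod_beta)
    ultimately show "p = q"
      using factorisation[OF _ m n, of "cmp (fst p) (snd p)"] compose[of "fst p" "snd p"]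
      by metis
  qed
  show "case_prod cmp ` ?P = ?T"
  proof
    show "case_prod cmp ` ?P \<subseteq> ?T" using compose by auto
    show "?T \<subseteq> case_prod cmp ` ?P"
    proof
      fix l assume "l \<in> ?T"
      then obtain p where p: "fst p \<in> Lam" "snd p \<in> Lam" "s (fst p) = r (snd p)"
        "d (fst p) = m" "d (snd p) = n" "l = cmp (fst p) (snd p)"
        using factorisation[OF _ m n] by blast
      moreover have "r (fst p) = v" "s (snd p) = w"
        using \<open>l \<in> ?T\<close> compose[OF p(1-3)] p(6) by auto
      ultimately have "p \<in> ?P" by (simp add: case_prod_beta)
      then show "l \<in> case_prod cmp ` ?P" using p(6) by (simp add: rev_image_eqI case_prod_beta)
    qed
  qed
qed

lemma finite_paths_of_degree:
  "in_Nk k m \<Longrightarrow> finite {l \<in> Lam. d l = m \<and> P l}"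
  using fin unfolding finite_kgraph_def by (auto intro: rev_finite_subset)

lemma mmul_vertex_matrix:
  assumes i: "i < k" and j: "j < k"
  shows "mmul V (A i) (A j) v w
    = real (card {l \<in> Lam. d l = (\<lambda>x. unitvec i x + unitvec j x) \<and> r l = v \<and> s l = w})"
proof -
  have ei: "in_Nk k (unitvec i)" and ej: "in_Nk k (unitvec j)"
    using i j unfolding in_Nk_def unitvec_def by auto
  define X where "X u = {l \<in> Lam. d l = unitvec i \<and> r l = v \<and> s l = u}" for u
  define Y where "Y u = {l \<in> Lam. d l = unitvec j \<and> r l = u \<and> s l = w}" for u
  have "mmul V (A i) (A j) v w = real (\<Sum>u\<in>V. card (X u \<times> Y u))"
    unfolding mmul_def vertex_matrix_def X_def Y_def by (simp add: card_cartesian_product)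
  also have "(\<Sum>u\<in>V. card (X u \<times> Y u)) = card (\<Union>u\<in>V. X u \<times> Y u)"
    using finite_V finite_paths_of_degree[OF ei] finite_paths_of_degree[OF ej]
    by (intro card_UN_disjoint[symmetric]) (auto simp: X_def Y_def)
  also have "(\<Union>u\<in>V. X u \<times> Y u) = {(mu, nu). mu \<in> Lam \<and> nu \<in> Lam \<and> s mu = r nu
      \<and> d mu = unitvec i \<and> d nu = unitvec j \<and> r mu = v \<and> s nu = w}"
    unfolding X_def Y_def using range_source_in_V by auto
  also have "card \<dots> = card {l \<in> Lam. d l = (\<lambda>x. unitvec i x + unitvec j x) \<and> r l = v \<and> s l = w}"
    by (rule bij_betw_same_card[OF bij_betw_composable_pairs[OF ei ej]])
  finally show ?thesis .
qed

lemma vertex_matrices_commute: "i < k \<Longrightarrow> j < k \<Longrightarrow> commute_on V (A i) (A j)"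
  by (rule commute_onI_mmul) (simp add: mmul_vertex_matrix add.commute)

lemma vertex_matrix_commute_AF: "i < k \<Longrightarrow> commute_on V (A i) (AF V A k F)"
  by (rule commute_on_AF[OF finite_V]) (simp add: vertex_matrices_commute)

end

section \<open>Eigenvectors for a harmonic component\<close>

locale harmonic_component = finite_k_graph +
  fixes F :: "(nat \<Rightarrow> nat) list" and C :: "'a set"
  assumes wc: "well_chosen k Lam d r s F"
    and harm: "F_harmonic k Lam d r s F C"
begin

abbreviation "A_F \<equiv> AF V A k F"
abbreviation "\<rho> \<equiv> spec_rad C A_F"
abbreviation "Cl \<equiv> vclosure Lam d r s C"

definition closure_eigenvector :: "('a \<Rightarrow> real) \<Rightarrow> bool" where
  "closure_eigenvector f \<longleftrightarrow> (\<forall>v\<in>V. mat_vec V A_F f v = \<rho> * f v) \<and> (\<forall>v\<in>V - Cl. f v = 0)"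

lemma component_rep: obtains c0 where "c0 \<in> V" "C = {w \<in> V. le c0 w \<and> le w c0}"
  using harm that unfolding F_harmonic_def nontrivial_component_def is_component_def by auto

lemma C_subset_V: "C \<subseteq> V"
  by (metis (no_types, lifting) component_rep mem_Collect_eq subsetI)

lemma finite_C: "finite C"
  using C_subset_V finite_V finite_subset by blast

lemma C_nonempty: "C \<noteq> {}"
  by (metis (no_types, lifting) component_rep empty_iff mem_Collect_eq vle_refl)

lemma vle_within_C: "v \<in> C \<Longrightarrow> w \<in> C \<Longrightarrow> le v w"
  by (rule component_rep) (auto intro: vle_trans)

lemma Cl_subset_V: "Cl \<subseteq> V"
  unfolding vclosure_def by blast

lemma vle_from_C_into_Cl: "v \<in> C \<Longrightarrow> w \<in> Cl \<Longrightarrow> le v w \<Longrightarrow> w \<in> C"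
  by (rule component_rep) (auto simp: vclosure_def vle_def[symmetric] intro: vle_trans)

lemma vle_into_Cl: "v \<in> V \<Longrightarrow> le v w \<Longrightarrow> w \<in> Cl \<Longrightarrow> v \<in> Cl"
  unfolding vclosure_def by (auto simp: vle_def[symmetric] intro: vle_trans)

lemma AF_vertex_matrix_nonneg: "A_F v w \<ge> 0"
  using vertex_matrix_nonneg by (intro AF_nonneg) blast

lemma AF_pos_imp_vle: "v \<in> V \<Longrightarrow> w \<in> V \<Longrightarrow> A_F v w > 0 \<Longrightarrow> le v w"
  using wc unfolding well_chosen_def vle_def paths_def by blast

lemma AF_pos_within_C: "v \<in> C \<Longrightarrow> w \<in> C \<Longrightarrow> v \<noteq> w \<Longrightarrow> A_F v w > 0"
proof -
  assume v: "v \<in> C" and w: "w \<in> C" and "v \<noteq> w"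
  obtain l where l: "l \<in> Lam" "r l = v" "s l = w"
    using vle_within_C[OF v w] unfolding vle_def paths_def by blast
  have "d l \<noteq> (\<lambda>_. 0)"
    using l vertex_range_source \<open>v \<noteq> w\<close> unfolding verts_def by force
  then show ?thesis using wc v w l C_subset_V unfolding well_chosen_def by blast
qed

lemma mat_vec_row_in_C:
  assumes B_nonneg: "\<forall>a b. B a b \<ge> 0" and B_pos: "\<forall>a\<in>V. \<forall>b\<in>V. B a b > 0 \<longrightarrow> le a b"
    and supp: "\<forall>u\<in>V - Cl. f u = 0" and v: "v \<in> C"
  shows "mat_vec V B f v = (\<Sum>w\<in>C. B v w * f w)"
  unfolding mat_vec_def
proof (rule sum.mono_neutral_right[OF finite_V C_subset_V], intro ballI)
  fix w assume w: "w \<in> V - C"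
  show "B v w * f w = 0"
  proof (cases "w \<in> Cl")
    case True
    then have "\<not> B v w > 0"
      using B_pos w v C_subset_V vle_from_C_into_Cl by blast
    then have "B v w = 0" using B_nonneg[rule_format, of v w] by linarith
    then show ?thesis by simp
  qed (use supp w in simp)
qed

lemma closure_eigenvector_zero_if_zero_on_C:
  "\<forall>v\<in>V. f v = 0" if "closure_eigenvector f" "\<forall>v\<in>C. f v = 0"
proof (cases "Cl - C = {}")
  case True
  then show ?thesis
    using that unfolding closure_eigenvector_def by blast
next
  case False
  then have "spec_rad (Cl - C) A_F < \<rho>"
    using harm unfolding F_harmonic_def Let_def by blast
  then show ?thesis
    using that finite_V Cl_subset_V unfolding closure_eigenvector_def
    by (intro eigenvector_zero_if_spec_rad_less[of V "Cl - C"]) auto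
qed

lemma closure_eigenvector_zero_on_C:
  assumes f: "closure_eigenvector f" and f_nonneg: "\<forall>v\<in>C. f v \<ge> 0"
    and v0: "v0 \<in> C" "f v0 = 0"
  shows "\<forall>w\<in>C. f w = 0"
proof -
  have "(\<Sum>u\<in>C. A_F v0 u * f u) = mat_vec V A_F f v0"
    using f v0(1) AF_vertex_matrix_nonneg AF_pos_imp_vle
    unfolding closure_eigenvector_def by (intro mat_vec_row_in_C[symmetric]) auto
  also have "\<dots> = 0" using f v0 C_subset_V unfolding closure_eigenvector_def by auto
  finally have "\<forall>u\<in>C. A_F v0 u * f u = 0"
    using f_nonneg AF_vertex_matrix_nonneg finite_C by (subst (asm) sum_nonneg_eq_0_iff) auto
  then show ?thesis using AF_pos_within_C[OF v0(1)] v0(2) by fastforce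
qed

lemma closure_eigenvector_pos_on_C:
  assumes f: "closure_eigenvector f" and f_nonneg: "\<forall>v\<in>V. f v \<ge> 0" and "\<exists>v\<in>V. f v \<noteq> 0"
  shows "\<forall>v\<in>C. f v > 0"
proof -
  have "\<not> (\<forall>v\<in>C. f v = 0)"
    using closure_eigenvector_zero_if_zero_on_C[OF f] assms(3) by blast
  then show ?thesis
    using closure_eigenvector_zero_on_C[OF f] f_nonneg C_subset_V
    by (metis less_eq_real_def subsetD)
qed

text \<open>Subtracting from y the largest multiple of x that keeps the difference nonnegative on C
  produces an eigenvector vanishing at a point of C.\<close>

lemma closure_eigenvector_proportional:
  assumes x: "closure_eigenvector x" and x_pos: "\<forall>v\<in>C. x v > 0"
    and y: "closure_eigenvector y"
  obtains t where "\<forall>v\<in>V. y v = t * x v"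
proof -
  define t where "t = Min ((\<lambda>u. y u / x u) ` C)"
  have "t \<in> (\<lambda>u. y u / x u) ` C" unfolding t_def using finite_C C_nonempty by simp
  then obtain v0 where v0: "v0 \<in> C" "y v0 / x v0 = t" by blast
  have t_le: "t * x u \<le> y u" if "u \<in> C" for u
  proof -
    have "t \<le> y u / x u" unfolding t_def using finite_C that by simp
    then show ?thesis using x_pos that by (simp add: le_divide_eq)
  qed
  define z where "z u = y u - t * x u" for u
  have z: "closure_eigenvector z"
    using x y mat_vec_eigen_combination[of V A_F y \<rho> x t]
    unfolding closure_eigenvector_def z_def by simp
  have "\<forall>u\<in>C. z u = 0"
  proof (rule closure_eigenvector_zero_on_C[OF z _ v0(1)])
    show "\<forall>v\<in>C. 0 \<le> z v" using t_le unfolding z_def by simp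
    show "z v0 = 0" using v0 x_pos[rule_format, OF v0(1)] unfolding z_def by (simp add: field_simps)
  qed
  then have "\<forall>u\<in>V. z u = 0" by (rule closure_eigenvector_zero_if_zero_on_C[OF z])
  then have "\<forall>u\<in>V. y u = t * x u" unfolding z_def by simp
  then show ?thesis by (rule that)
qed

lemma vertex_matrix_preserves_closure_eigenvector:
  assumes i: "i < k" and x: "closure_eigenvector x"
  shows "closure_eigenvector (mat_vec V (A i) x)"
  unfolding closure_eigenvector_def
proof (intro conjI ballI)
  fix v assume "v \<in> V"
  have "mat_vec V A_F (mat_vec V (A i) x) v = mat_vec V (A i) (mat_vec V A_F x) v"
    using vertex_matrix_commute_AF[OF i] \<open>v \<in> V\<close> unfolding commute_on_def by metis
  also have "\<dots> = mat_vec V (A i) (\<lambda>w. \<rho> * x w) v"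
    using x unfolding closure_eigenvector_def by (intro mat_vec_cong) simp
  finally show "mat_vec V A_F (mat_vec V (A i) x) v = \<rho> * mat_vec V (A i) x v"
    by (simp add: mat_vec_def sum_distrib_left mult.left_commute)
next
  fix v assume v: "v \<in> V - Cl"
  have "A i v w * x w = 0" if w: "w \<in> V" for w
  proof (cases "w \<in> Cl")
    case True
    then have "\<not> A i v w > 0" using v vle_into_Cl vertex_matrix_pos_imp_vle by blast
    then have "A i v w = 0" using vertex_matrix_nonneg[of i v w] by linarith
    then show ?thesis by simp
  next
    case False
    then show ?thesis using x w unfolding closure_eigenvector_def by simp
  qed
  then show "mat_vec V (A i) x v = 0" unfolding mat_vec_def by (simp add: sum.neutral)
qed

lemma vertex_matrix_eigenvector:
  assumes i: "i < k" and x: "closure_eigenvector x"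
    and x_nonneg: "\<forall>v\<in>V. x v \<ge> 0" and x_nonzero: "\<exists>v\<in>V. x v \<noteq> 0"
  shows "\<forall>v\<in>V. mat_vec V (A i) x v = spec_rad C (A i) * x v"
proof -
  have x_pos: "\<forall>v\<in>C. x v > 0" by (rule closure_eigenvector_pos_on_C[OF x x_nonneg x_nonzero])
  obtain t where t: "\<forall>v\<in>V. mat_vec V (A i) x v = t * x v"
    using closure_eigenvector_proportional[OF x x_pos vertex_matrix_preserves_closure_eigenvector[OF i x]] .
  have "\<forall>v\<in>C. (\<Sum>w\<in>C. A i v w * x w) = t * x v"
  proof
    fix v assume "v \<in> C"
    have "(\<Sum>w\<in>C. A i v w * x w) = mat_vec V (A i) x v"
      using x \<open>v \<in> C\<close> vertex_matrix_nonneg vertex_matrix_pos_imp_vle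
      unfolding closure_eigenvector_def by (intro mat_vec_row_in_C[symmetric]) auto
    also have "\<dots> = t * x v" using t \<open>v \<in> C\<close> C_subset_V by blast
    finally show "(\<Sum>w\<in>C. A i v w * x w) = t * x v" .
  qed
  then have "spec_rad C (A i) = t"
    using vertex_matrix_nonneg by (intro spec_rad_eq_pos_eigenvalue[OF finite_C C_nonempty x_pos]) auto
  then show ?thesis using t by simp
qed

end

theorem lemma7p7:
  fixes k :: nat and Lam :: "'a set" and d :: "'a \<Rightarrow> nat \<Rightarrow> nat"
    and r s :: "'a \<Rightarrow> 'a" and cmp :: "'a \<Rightarrow> 'a \<Rightarrow> 'a"
    and F :: "(nat \<Rightarrow> nat) list" and C :: "'a set" and x :: "'a \<Rightarrow> real"
  assumes kg: "is_kgraph k Lam d r s cmp"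
    and fin: "finite_kgraph k Lam d"
    and nosrc: "no_sources k Lam d r"
    and wc: "well_chosen k Lam d r s F"
    and harm: "F_harmonic k Lam d r s F C"
    and xnonneg: "\<forall>v\<in>verts Lam d. x v \<ge> 0"
    and xnorm: "(\<Sum>v\<in>verts Lam d. x v) = 1"
    and xeig: "\<forall>v\<in>verts Lam d.
       (\<Sum>w\<in>verts Lam d. AF (verts Lam d) (vertex_matrix Lam d r s) k F v w * x w)
         = spec_rad C (AF (verts Lam d) (vertex_matrix Lam d r s) k F) * x v"
    and xsupp: "\<forall>v\<in>verts Lam d - vclosure Lam d r s C. x v = 0"
  shows "\<forall>i<k. \<forall>v\<in>verts Lam d.
       (\<Sum>w\<in>verts Lam d. vertex_matrix Lam d r s i v w * x w)
         = spec_rad C (vertex_matrix Lam d r s i) * x v"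
proof -
  interpret harmonic_component k Lam d r s cmp F C
    by unfold_locales (fact kg fin wc harm)+
  have x: "closure_eigenvector x"
    using xeig xsupp unfolding closure_eigenvector_def mat_vec_def by simp
  have x_nonzero: "\<exists>v\<in>V. x v \<noteq> 0"
  proof (rule ccontr)
    assume "\<not> (\<exists>v\<in>V. x v \<noteq> 0)"
    then have "(\<Sum>v\<in>V. x v) = 0" by simp
    with xnorm show False by simp
  qed
  show ?thesis
  proof (intro allI impI)
    fix i assume "i < k"
    from vertex_matrix_eigenvector[OF this x xnonneg x_nonzero]
    show "\<forall>v\<in>V. (\<Sum>w\<in>V. A i v w * x w) = spec_rad C (A i) * x v"
      by (simp add: mat_vec_def)
  qed
qed

end
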